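(* Let $G$ be a connected finite simple graph with edge weight function $w$ and vertex weight function $w_1$, let $u$ be a vertex of $G$ and let $T=T(G,u)$ be the weighted path-tree of $G$ with respect to $u$. Then $\eta_{(w,w_1)}(G,x)$ divides $\eta_{(w,w_1)}(T,x)$.
   Context: An edge weight function $w$ assigns a nonzero complex number to each edge; a vertex weight function $w_1$ assigns a real number (possibly $0$) to each vertex; induced subgraphs carry restricted weights. For $A\subseteq E(G)$, $w(A)=\prod_{e\in A}w(e)$. $\mu_w(G,x)=\sum_{M}(-1)^{|M|}|w(M)|^2x^{n-2|M|}$ over all matchings $M$ (including empty). $\eta_{(w,w_1)}(G,x)=\sum_{S\subseteq V(G)}(-1)^{|V(G)\setminus S|}\big(\prod_{v\in V(G)\setminus S}w_1(v)\big)\mu_w(G[S],x)$ with $G[S]$ the induced subgraph; $\mu_w$ of the empty graph is $1$. The path-tree $T(G,u)$ has as vertices the paths in $G$ starting at $u$ (including the trivial path $u$); two such paths are adjacent iff one is obtained from the other by appending one vertex $y$ adjacent in $G$ to the last vertex $z$ of the shorter path; this edge gets weight $w(e_{zy})$. The trivial path $u$ gets vertex weight $w_1(u)$; a path of length at least $1$ gets weight $w_1$ of its endpoint other than $u$. *)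

theory Defs
  imports Complex_Main "HOL-Computational_Algebra.Polynomial"
begin

definition simple_graph :: "'a set \<Rightarrow> 'a set set \<Rightarrow> bool" where
  "simple_graph V E \<longleftrightarrow> finite V \<and>
     (\<forall>e\<in>E. \<exists>a b. a \<noteq> b \<and> a \<in> V \<and> b \<in> V \<and> e = {a, b})"

definition is_walk :: "'a set \<Rightarrow> 'a set set \<Rightarrow> 'a list \<Rightarrow> bool" where
  "is_walk V E p \<longleftrightarrow> p \<noteq> [] \<and> set p \<subseteq> V \<and> successively (\<lambda>a b. {a, b} \<in> E) p"

definition graph_connected :: "'a set \<Rightarrow> 'a set set \<Rightarrow> bool" where
  "graph_connected V E \<longleftrightarrow>
     (\<forall>a\<in>V. \<forall>b\<in>V. \<exists>p. is_walk V E p \<and> hd p = a \<and> last p = b)"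

definition matchings :: "'a set set \<Rightarrow> 'a set set set" where
  "matchings E = {M. M \<subseteq> E \<and> (\<forall>e1\<in>M. \<forall>e2\<in>M. e1 \<noteq> e2 \<longrightarrow> e1 \<inter> e2 = {})}"

definition mu_poly :: "'a set \<Rightarrow> 'a set set \<Rightarrow> ('a set \<Rightarrow> complex) \<Rightarrow> real poly" where
  "mu_poly V E w = (\<Sum>M\<in>matchings E.
      smult ((-1) ^ card M * (\<Prod>e\<in>M. (cmod (w e))\<^sup>2)) (monom 1 (card V - 2 * card M)))"

definition eta_poly :: "'a set \<Rightarrow> 'a set set \<Rightarrow> ('a set \<Rightarrow> complex) \<Rightarrow> ('a \<Rightarrow> real) \<Rightarrow> real poly" where
  "eta_poly V E w w1 = (\<Sum>S\<in>Pow V.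
      smult ((-1) ^ card (V - S) * (\<Prod>v\<in>V - S. w1 v)) (mu_poly S {e\<in>E. e \<subseteq> S} w))"

definition pt_vertices :: "'a set \<Rightarrow> 'a set set \<Rightarrow> 'a \<Rightarrow> 'a list set" where
  "pt_vertices V E u = {p. is_walk V E p \<and> distinct p \<and> hd p = u}"

definition pt_edges :: "'a set \<Rightarrow> 'a set set \<Rightarrow> 'a \<Rightarrow> 'a list set set" where
  "pt_edges V E u = {{p, p @ [y]} | p y. p \<in> pt_vertices V E u \<and> p @ [y] \<in> pt_vertices V E u}"

text \<open>Edge {p, p@[y]} gets weight w({last p, y}) = w(last ` {p, p@[y]}).\<close>
definition pt_edge_weight :: "('a set \<Rightarrow> complex) \<Rightarrow> 'a list set \<Rightarrow> complex" where
  "pt_edge_weight w e = w (last ` e)"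

definition pt_vertex_weight :: "('a \<Rightarrow> real) \<Rightarrow> 'a list \<Rightarrow> real" where
  "pt_vertex_weight w1 p = w1 (last p)"

end

theory Submission
  imports Defs "HOL-Library.Disjoint_Sets"
begin

text \<open>
  Expanding the products, \<eta>(G) is the signed sum over the matchings M of G of the product of
  |w e|^2 over e \<in> M times the product of x - w1 v over the vertices v missed by M. Such matching
  sums F are multiplicative over disjoint unions without crossing edges and satisfy the vertex
  recursion F(G) = (x - w1 u) F(G - u) - \<Sum> |w(uv)|^2 F(G - u - v), summed over the neighbours v
  of u. Deleting the root of T = T(G, u) leaves the disjoint union of the path trees T(G - u, v)
  over these neighbours; comparing the two recursions at u, with induction on G - u, gives
  Godsil's identity F(G) F(T - u) = F(T) F(G - u). Divisibility follows by induction on the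
  number of vertices: every component of G - u contains a neighbour of u, so F(G - u) divides
  \<Prod> F(T(G - u, v)) = F(T - u), and the nonzero factor F(G - u) cancels.
\<close>

section \<open>Matchings of induced subgraphs\<close>

definition induced_edges :: "'a set set \<Rightarrow> 'a set \<Rightarrow> 'a set set" where
  "induced_edges E S = {e\<in>E. e \<subseteq> S}"

definition doubleton_edges :: "'a set set \<Rightarrow> bool" where
  "doubleton_edges E \<longleftrightarrow> (\<forall>e\<in>E. \<exists>a b. a \<noteq> b \<and> e = {a, b})"

definition neighbours :: "'a set \<Rightarrow> 'a set set \<Rightarrow> 'a \<Rightarrow> 'a set" where
  "neighbours S E u = {v\<in>S. {u, v} \<in> E}"

lemma finite_neighbours: "finite S \<Longrightarrow> finite (neighbours S E u)"
  unfolding neighbours_def by simp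

lemma doubleton_edges_nonempty: "doubleton_edges E \<Longrightarrow> e \<in> E \<Longrightarrow> e \<noteq> {}"
  unfolding doubleton_edges_def by blast

lemma doubleton_edges_neq: "doubleton_edges E \<Longrightarrow> {u, v} \<in> E \<Longrightarrow> u \<noteq> v"
  unfolding doubleton_edges_def by (metis doubleton_eq_iff)

lemma doubleton_edge_through:
  assumes "doubleton_edges E" "e \<in> E" "u \<in> e"
  shows "\<exists>v. e = {u, v}"
proof -
  obtain a b where "e = {a, b}" using assms(1,2) unfolding doubleton_edges_def by blast
  with assms(3) show ?thesis by (metis insert_commute insert_iff singletonD)
qed

lemma neighbour_neq: "doubleton_edges E \<Longrightarrow> v \<in> neighbours S E u \<Longrightarrow> v \<in> S - {u}"
  using doubleton_edges_neq unfolding neighbours_def by fastforce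

lemma matching_induced_edgesD:
  "M \<in> matchings (induced_edges E S) \<Longrightarrow> e \<in> M \<Longrightarrow> e \<in> E \<and> e \<subseteq> S"
  unfolding matchings_def induced_edges_def by auto

lemma matchings_induced_edges_subset_Pow: "matchings (induced_edges E S) \<subseteq> Pow (Pow S)"
  unfolding matchings_def induced_edges_def by auto

lemma finite_matchings_induced_edges: "finite S \<Longrightarrow> finite (matchings (induced_edges E S))"
  using matchings_induced_edges_subset_Pow by (metis finite_Pow_iff finite_subset)

lemma finite_matching_induced_edges:
  "finite S \<Longrightarrow> M \<in> matchings (induced_edges E S) \<Longrightarrow> finite M"
  using matchings_induced_edges_subset_Pow by (metis PowD finite_Pow_iff finite_subset subsetD)

lemma Union_matching_induced_edges_subset: "M \<in> matchings (induced_edges E S) \<Longrightarrow> \<Union>M \<subseteq> S"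
  unfolding matchings_def induced_edges_def by auto

lemma matchings_induced_edges_mono:
  "T \<subseteq> S \<Longrightarrow> matchings (induced_edges E T) = {M\<in>matchings (induced_edges E S). \<Union>M \<subseteq> T}"
  unfolding matchings_def induced_edges_def by auto

lemma card_Union_matching:
  assumes "doubleton_edges E" "finite S" "M \<in> matchings (induced_edges E S)"
  shows "card (\<Union>M) = 2 * card M"
proof -
  have "M \<subseteq> Pow S" "pairwise disjnt M"
    using assms(3) unfolding matchings_def induced_edges_def pairwise_def disjnt_def by auto
  then have "card (\<Union>M) = sum card M"
    using assms(2) by (intro card_Union_disjoint) (auto intro: finite_subset)
  also have "\<dots> = sum (\<lambda>_. 2) M"
  proof (rule sum.cong)
    fix e assume "e \<in> M"
    with assms(1) show "card e = 2"
      using matching_induced_edgesD[OF assms(3)] unfolding doubleton_edges_def by fastforce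
  qed simp
  finally show ?thesis by simp
qed

lemma insert_edge_matching:
  assumes "M \<in> matchings (induced_edges E (S - {u, v}))" "{u, v} \<in> E" "u \<in> S" "v \<in> S"
  shows "insert {u, v} M \<in> matchings (induced_edges E S)"
proof -
  have "e \<inter> {u, v} = {}" if "e \<in> M" for e
    using Union_matching_induced_edges_subset[OF assms(1)] that by blast
  with assms show ?thesis
    unfolding matchings_def induced_edges_def by (auto simp: Int_commute)
qed

lemma remove_edge_matching:
  assumes "M \<in> matchings (induced_edges E S)" "e \<in> M"
  shows "M - {e} \<in> matchings (induced_edges E (S - e))"
  using assms unfolding matchings_def induced_edges_def by blast

lemma inj_on_insert_edge_matchings:
  "inj_on (\<lambda>(v, M). insert {u, v} M) (SIGMA v:V. matchings (induced_edges E (S - {u, v})))"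
proof (rule inj_onI)
  fix x y
  assume x: "x \<in> (SIGMA v:V. matchings (induced_edges E (S - {u, v})))"
    and y: "y \<in> (SIGMA v:V. matchings (induced_edges E (S - {u, v})))"
    and eq: "(\<lambda>(v, M). insert {u, v} M) x = (\<lambda>(v, M). insert {u, v} M) y"
  obtain v M v' M' where xy: "x = (v, M)" "y = (v', M')" by (cases x, cases y)
  have M: "M \<in> matchings (induced_edges E (S - {u, v}))"
    and M': "M' \<in> matchings (induced_edges E (S - {u, v'}))"
    using x y xy by auto
  have "{u, v} \<notin> M" "{u, v'} \<notin> M'" "{u, v} \<notin> M'"
    using Union_matching_induced_edges_subset[OF M] Union_matching_induced_edges_subset[OF M'] by auto
  moreover have eq': "insert {u, v} M = insert {u, v'} M'" using eq xy by simp
  ultimately have "{u, v} = {u, v'}" by blast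
  with eq' \<open>{u, v} \<notin> M\<close> \<open>{u, v'} \<notin> M'\<close> have "v = v'" "M = M'"
    by (metis doubleton_eq_iff, metis insert_ident)
  with xy show "x = y" by simp
qed

lemma matchings_covering_vertex:
  assumes E: "doubleton_edges E" and u: "u \<in> S"
  shows "{M\<in>matchings (induced_edges E S). u \<in> \<Union>M}
       = (\<lambda>(v, M). insert {u, v} M) ` (SIGMA v:neighbours S E u. matchings (induced_edges E (S - {u, v})))"
    (is "?L = ?h ` ?Sg")
proof
  show "?h ` ?Sg \<subseteq> ?L"
  proof
    fix M assume "M \<in> ?h ` ?Sg"
    then obtain v M' where "v \<in> neighbours S E u" "M' \<in> matchings (induced_edges E (S - {u, v}))"
      and "M = insert {u, v} M'" by auto
    then show "M \<in> ?L"
      using insert_edge_matching[of M' E S u v] u unfolding neighbours_def by auto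
  qed
  show "?L \<subseteq> ?h ` ?Sg"
  proof
    fix M assume "M \<in> ?L"
    then have M: "M \<in> matchings (induced_edges E S)" and "u \<in> \<Union>M" by auto
    then obtain e where e: "e \<in> M" "u \<in> e" by blast
    have "e \<in> E" "e \<subseteq> S" using matching_induced_edgesD[OF M e(1)] by auto
    moreover obtain v where ev: "e = {u, v}"
      using doubleton_edge_through[OF E \<open>e \<in> E\<close> e(2)] by blast
    ultimately have "v \<in> neighbours S E u" unfolding neighbours_def by auto
    moreover have "M - {e} \<in> matchings (induced_edges E (S - {u, v}))"
      using remove_edge_matching[OF M e(1)] ev by simp
    ultimately have "(v, M - {e}) \<in> ?Sg" by simp
    moreover have "M = ?h (v, M - {e})" using e(1) ev by auto
    ultimately show "M \<in> ?h ` ?Sg" by (rule rev_image_eqI)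
  qed
qed

section \<open>Matching sums\<close>

text \<open>
  \<eta>(G) is the matching sum with q e = [:|w e|^2:] and p v = x - w1 v. Keeping q and p abstract
  lets the weights of a path tree be pulled back along \<open>last\<close>.
\<close>

definition matching_summand ::
    "('a set \<Rightarrow> 'b::comm_ring_1) \<Rightarrow> ('a \<Rightarrow> 'b) \<Rightarrow> 'a set \<Rightarrow> 'a set set \<Rightarrow> 'b" where
  "matching_summand q p S M = (-1) ^ card M * prod q M * prod p (S - \<Union>M)"

definition matching_sum ::
    "('a set \<Rightarrow> 'b::comm_ring_1) \<Rightarrow> ('a \<Rightarrow> 'b) \<Rightarrow> 'a set set \<Rightarrow> 'a set \<Rightarrow> 'b" where
  "matching_sum q p E S = (\<Sum>M\<in>matchings (induced_edges E S). matching_summand q p S M)"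

lemma smult_sum_right: "smult a (sum f A) = (\<Sum>x\<in>A. smult a (f x))"
  by (induct A rule: infinite_finite_induct) (auto simp: smult_add_right)

lemma prod_linear_poly_expand:
  fixes c :: "'a \<Rightarrow> 'b::comm_ring_1"
  assumes "finite R"
  shows "(\<Prod>v\<in>R. [:- c v, 1:]) =
    (\<Sum>X\<in>Pow R. smult ((-1) ^ card (R - X) * prod c (R - X)) (monom 1 (card X)))"
proof -
  have "(\<Prod>v\<in>R. [:- c v, 1:]) = (\<Prod>v\<in>R. [:0, 1:] + [:- c v:])"
    by simp
  also have "\<dots> = (\<Sum>X\<in>Pow R. (\<Prod>x\<in>X. [:0, 1:]) * (\<Prod>x\<in>R - X. [:- c x:]))"
    by (rule prod_add[OF assms])
  also have "\<dots> = (\<Sum>X\<in>Pow R. smult ((-1) ^ card (R - X) * prod c (R - X)) (monom 1 (card X)))"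
    by (simp add: prod_to_poly prod_uminus monom_altdef mult.commute)
  finally show ?thesis .
qed

lemma sum_supersets_linear_poly:
  fixes c :: "'a \<Rightarrow> 'b::comm_ring_1"
  assumes "finite S" "U \<subseteq> S"
  shows "(\<Sum>T | T \<subseteq> S \<and> U \<subseteq> T.
            smult ((-1) ^ card (S - T) * prod c (S - T)) (monom 1 (card T - card U)))
       = (\<Prod>v\<in>S - U. [:- c v, 1:])"
proof -
  have fin: "finite U" "finite (S - U)" using assms finite_subset by auto
  have "{T. T \<subseteq> S \<and> U \<subseteq> T} = (\<lambda>X. U \<union> X) ` Pow (S - U)"
    using assms(2) by (auto intro!: image_eqI[where x = "_ - U"])
  moreover have "inj_on (\<lambda>X. U \<union> X) (Pow (S - U))"
    by (rule inj_onI) blast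
  moreover have "card (U \<union> X) = card U + card X" "S - (U \<union> X) = (S - U) - X"
    if "X \<in> Pow (S - U)" for X
    using that fin by (auto intro: card_Un_disjoint finite_subset)
  ultimately show ?thesis
    unfolding prod_linear_poly_expand[OF fin(2)] by (simp add: sum.reindex)
qed

lemma eta_poly_eq_matching_sum:
  assumes "doubleton_edges E" "finite S"
  shows "eta_poly S (induced_edges E S) w w1 =
         matching_sum (\<lambda>e. [:(cmod (w e))\<^sup>2:]) (\<lambda>v. [:- w1 v, 1:]) E S"
proof -
  define c where "c M = (-1) ^ card M * (\<Prod>e\<in>M. (cmod (w e))\<^sup>2)" for M :: "'a set set"
  define a where "a T = (-1) ^ card (S - T) * prod w1 (S - T)" for T
  define MS where "MS = matchings (induced_edges E S)"
  have "eta_poly S (induced_edges E S) w w1 =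
    (\<Sum>T\<in>Pow S. \<Sum>M | M \<in> MS \<and> \<Union>M \<subseteq> T. smult (a T * c M) (monom 1 (card T - 2 * card M)))"
    unfolding eta_poly_def mu_poly_def
  proof (rule sum.cong[OF refl])
    fix T assume "T \<in> Pow S"
    then have "{e \<in> induced_edges E S. e \<subseteq> T} = induced_edges E T"
      "matchings (induced_edges E T) = {M \<in> MS. \<Union>M \<subseteq> T}"
      using matchings_induced_edges_mono[of T S E] unfolding MS_def induced_edges_def by auto
    then show "smult ((-1) ^ card (S - T) * prod w1 (S - T))
        (\<Sum>M\<in>matchings {e \<in> induced_edges E S. e \<subseteq> T}.
           smult ((-1) ^ card M * (\<Prod>e\<in>M. (cmod (w e))\<^sup>2)) (monom 1 (card T - 2 * card M)))
      = (\<Sum>M | M \<in> MS \<and> \<Union>M \<subseteq> T. smult (a T * c M) (monom 1 (card T - 2 * card M)))"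
      by (simp add: a_def c_def smult_sum_right)
  qed
  also have "\<dots> = (\<Sum>M\<in>MS. \<Sum>T | T \<subseteq> S \<and> \<Union>M \<subseteq> T.
                        smult (a T * c M) (monom 1 (card T - 2 * card M)))"
    using sum.swap_restrict[of "Pow S" MS _ "\<lambda>T M. \<Union>M \<subseteq> T"] assms(2)
      finite_matchings_induced_edges[OF assms(2)]
    unfolding MS_def by (simp add: Pow_def)
  also have "\<dots> = (\<Sum>M\<in>MS. smult (c M) (\<Prod>v\<in>S - \<Union>M. [:- w1 v, 1:]))"
  proof (rule sum.cong[OF refl])
    fix M assume M: "M \<in> MS"
    then have "card (\<Union>M) = 2 * card M" and US: "\<Union>M \<subseteq> S"
      unfolding MS_def
      by (simp_all add: card_Union_matching[OF assms] Union_matching_induced_edges_subset)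
    then have "(\<Sum>T | T \<subseteq> S \<and> \<Union>M \<subseteq> T. smult (a T * c M) (monom 1 (card T - 2 * card M)))
        = smult (c M) (\<Sum>T | T \<subseteq> S \<and> \<Union>M \<subseteq> T. smult (a T) (monom 1 (card T - card (\<Union>M))))"
      by (simp add: smult_sum_right mult.commute)
    also have "\<dots> = smult (c M) (\<Prod>v\<in>S - \<Union>M. [:- w1 v, 1:])"
      using sum_supersets_linear_poly[OF assms(2) US, of w1] by (simp add: a_def)
    finally show "(\<Sum>T | T \<subseteq> S \<and> \<Union>M \<subseteq> T. smult (a T * c M) (monom 1 (card T - 2 * card M)))
        = smult (c M) (\<Prod>v\<in>S - \<Union>M. [:- w1 v, 1:])" .
  qed
  also have "\<dots> = matching_sum (\<lambda>e. [:(cmod (w e))\<^sup>2:]) (\<lambda>v. [:- w1 v, 1:]) E S"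
  proof -
    have "(-1 :: real poly) ^ n = [:(-1) ^ n:]" for n
      by (induct n) (simp_all add: mult_to_poly[symmetric])
    then show ?thesis
      by (simp add: matching_sum_def matching_summand_def MS_def c_def prod_to_poly mult_to_poly
          mult.commute)
  qed
  finally show ?thesis .
qed

lemma matching_sum_empty:
  assumes "doubleton_edges E"
  shows "matching_sum q p E {} = 1"
proof -
  have "induced_edges E {} = {}"
    using doubleton_edges_nonempty[OF assms] unfolding induced_edges_def by blast
  then have "matchings (induced_edges E {}) = {{}}"
    unfolding matchings_def by auto
  then show ?thesis unfolding matching_sum_def matching_summand_def by simp
qed

lemma matching_edge_not_subset:
  assumes "doubleton_edges E" "M \<in> matchings (induced_edges E A)" "e \<in> M" "A \<inter> B = {}"
  shows "\<not> e \<subseteq> B"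
  using matching_induced_edgesD[OF assms(2,3)] doubleton_edges_nonempty[OF assms(1)] assms(4)
  by blast

lemma Un_matchings_induced_edges:
  assumes M1: "M1 \<in> matchings (induced_edges E A)" and M2: "M2 \<in> matchings (induced_edges E B)"
    and disj: "A \<inter> B = {}"
  shows "M1 \<union> M2 \<in> matchings (induced_edges E (A \<union> B))"
proof -
  have cross: "e1 \<inter> e2 = {}" if "e1 \<in> M1" "e2 \<in> M2" for e1 e2
    using matching_induced_edgesD[OF M1 that(1)] matching_induced_edgesD[OF M2 that(2)] disj by blast
  have "M1 \<union> M2 \<subseteq> induced_edges E (A \<union> B)"
    using M1 M2 unfolding matchings_def induced_edges_def by blast
  moreover have "e1 \<inter> e2 = {}" if "e1 \<in> M1 \<union> M2" "e2 \<in> M1 \<union> M2" "e1 \<noteq> e2" for e1 e2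
  proof -
    have "\<forall>e1\<in>M1. \<forall>e2\<in>M1. e1 \<noteq> e2 \<longrightarrow> e1 \<inter> e2 = {}"
      "\<forall>e1\<in>M2. \<forall>e2\<in>M2. e1 \<noteq> e2 \<longrightarrow> e1 \<inter> e2 = {}"
      using M1 M2 unfolding matchings_def by auto
    with that cross show ?thesis by (metis Int_commute UnE)
  qed
  ultimately show ?thesis unfolding matchings_def by blast
qed

lemma bij_betw_Un_matchings:
  assumes E: "doubleton_edges E" and disj: "A \<inter> B = {}"
    and sep: "\<And>e. e \<in> induced_edges E (A \<union> B) \<Longrightarrow> e \<subseteq> A \<or> e \<subseteq> B"
  shows "bij_betw (\<lambda>(M1, M2). M1 \<union> M2)
           (matchings (induced_edges E A) \<times> matchings (induced_edges E B))
           (matchings (induced_edges E (A \<union> B)))"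
proof -
  define MA where "MA = matchings (induced_edges E A)"
  define MB where "MB = matchings (induced_edges E B)"
  have inA: "e \<in> E" "e \<subseteq> A" "\<not> e \<subseteq> B" if "e \<in> M1" "M1 \<in> MA" for e M1
    using that matching_induced_edgesD matching_edge_not_subset[OF E _ _ disj]
    unfolding MA_def by blast+
  have inB: "e \<in> E" "e \<subseteq> B" "\<not> e \<subseteq> A" if "e \<in> M2" "M2 \<in> MB" for e M2
    using that matching_induced_edgesD matching_edge_not_subset[OF E, of _ B _ A] disj
    unfolding MB_def by blast+
  have recover: "{e \<in> M1 \<union> M2. e \<subseteq> A} = M1 \<and> {e \<in> M1 \<union> M2. e \<subseteq> B} = M2"
    if M: "M1 \<in> MA" "M2 \<in> MB" for M1 M2
    using inA(2,3)[OF _ M(1)] inB(2,3)[OF _ M(2)] by blast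
  show ?thesis
    unfolding MA_def[symmetric] MB_def[symmetric]
  proof (rule bij_betw_byWitness[where f' = "\<lambda>M. ({e\<in>M. e \<subseteq> A}, {e\<in>M. e \<subseteq> B})"],
         goal_cases)
    case 1
    show ?case using recover by auto
  next
    case 2
    show ?case using sep unfolding matchings_def by auto
  next
    case 3
    show ?case using Un_matchings_induced_edges[OF _ _ disj] unfolding MA_def MB_def by auto
  next
    case 4
    show ?case unfolding MA_def MB_def matchings_def induced_edges_def by blast
  qed
qed

lemma matching_sum_Un:
  assumes E: "doubleton_edges E" and fin: "finite A" "finite B" and disj: "A \<inter> B = {}"
    and sep: "\<And>e. e \<in> induced_edges E (A \<union> B) \<Longrightarrow> e \<subseteq> A \<or> e \<subseteq> B"
  shows "matching_sum q p E (A \<union> B) = matching_sum q p E A * matching_sum q p E B"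
proof -
  define MA where "MA = matchings (induced_edges E A)"
  define MB where "MB = matchings (induced_edges E B)"
  have summand: "matching_summand q p (A \<union> B) (M1 \<union> M2) = matching_summand q p A M1 * matching_summand q p B M2"
    if M: "M1 \<in> MA" "M2 \<in> MB" for M1 M2
  proof -
    have UA: "\<Union>M1 \<subseteq> A" and UB: "\<Union>M2 \<subseteq> B"
      using M Union_matching_induced_edges_subset unfolding MA_def MB_def by blast+
    have "finite M1" "finite M2"
      using M fin finite_matching_induced_edges unfolding MA_def MB_def by blast+
    moreover have "M1 \<inter> M2 = {}"
      using M matching_edge_not_subset[OF E _ _ disj] Union_matching_induced_edges_subset
      unfolding MA_def MB_def by blast
    moreover have "(A \<union> B) - \<Union>(M1 \<union> M2) = (A - \<Union>M1) \<union> (B - \<Union>M2)"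
      using UA UB disj by blast
    moreover have "prod p ((A - \<Union>M1) \<union> (B - \<Union>M2)) = prod p (A - \<Union>M1) * prod p (B - \<Union>M2)"
      using fin disj by (intro prod.union_disjoint) auto
    ultimately show ?thesis
      unfolding matching_summand_def
      by (simp add: card_Un_disjoint prod.union_disjoint power_add mult_ac)
  qed
  have "matching_sum q p E A * matching_sum q p E B
      = (\<Sum>M1\<in>MA. \<Sum>M2\<in>MB. matching_summand q p A M1 * matching_summand q p B M2)"
    unfolding matching_sum_def MA_def MB_def by (rule sum_product)
  also have "\<dots> = (\<Sum>(M1, M2)\<in>MA \<times> MB. matching_summand q p (A \<union> B) (M1 \<union> M2))"
    unfolding sum.cartesian_product by (rule sum.cong) (auto simp: summand)
  also have "\<dots> = matching_sum q p E (A \<union> B)"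
    using sum.reindex_bij_betw[OF bij_betw_Un_matchings[OF E disj sep]]
    unfolding matching_sum_def MA_def MB_def by (simp add: case_prod_unfold)
  finally show ?thesis by simp
qed

lemma matching_sum_UN:
  assumes E: "doubleton_edges E" and "finite I" "\<And>i. i \<in> I \<Longrightarrow> finite (A i)"
    and "disjoint_family_on A I"
    and "\<And>e. e \<in> induced_edges E (\<Union>i\<in>I. A i) \<Longrightarrow> \<exists>i\<in>I. e \<subseteq> A i"
  shows "matching_sum q p E (\<Union>i\<in>I. A i) = (\<Prod>i\<in>I. matching_sum q p E (A i))"
  using assms(2-)
proof (induction I rule: finite_induct)
  case empty
  then show ?case using matching_sum_empty[OF E] by simp
next
  case (insert i I)
  have disj: "A i \<inter> (\<Union>k\<in>I. A k) = {}" and disjI: "disjoint_family_on A I"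
    using insert.prems(2) unfolding disjoint_family_on_insert[OF insert.hyps(2)] by auto
  have inside: "\<exists>j\<in>insert i I. e \<subseteq> A j" if "e \<in> E" "e \<subseteq> A i \<union> (\<Union>k\<in>I. A k)" for e
    using that insert.prems(3) unfolding induced_edges_def by auto
  have "\<exists>k\<in>I. e \<subseteq> A k" if e: "e \<in> induced_edges E (\<Union>k\<in>I. A k)" for e
  proof -
    from e have "e \<in> E" "e \<subseteq> (\<Union>k\<in>I. A k)" unfolding induced_edges_def by auto
    moreover from this have "e \<noteq> {}" using doubleton_edges_nonempty[OF E] by blast
    ultimately show ?thesis using inside disj by blast
  qed
  then have IH: "matching_sum q p E (\<Union>k\<in>I. A k) = (\<Prod>k\<in>I. matching_sum q p E (A k))"
    using insert.IH insert.prems(1) disjI by blast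
  have "matching_sum q p E (A i \<union> (\<Union>k\<in>I. A k))
      = matching_sum q p E (A i) * matching_sum q p E (\<Union>k\<in>I. A k)"
  proof (rule matching_sum_Un[OF E _ _ disj])
    show "finite (A i)" "finite (\<Union>k\<in>I. A k)"
      using insert.hyps(1) insert.prems(1) by auto
    show "e \<subseteq> A i \<or> e \<subseteq> (\<Union>k\<in>I. A k)" if "e \<in> induced_edges E (A i \<union> (\<Union>k\<in>I. A k))" for e
      using inside[of e] that unfolding induced_edges_def by blast
  qed
  with IH insert.hyps show ?case by simp
qed

lemma matching_sum_UN_subset:
  assumes E: "doubleton_edges E" and fin: "finite I" "\<And>i. i \<in> I \<Longrightarrow> finite (A i)"
    and disj: "disjoint_family_on A I"
    and inside: "\<And>e. e \<in> induced_edges E (\<Union>i\<in>I. A i) \<Longrightarrow> \<exists>i\<in>I. e \<subseteq> A i"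
    and sub: "\<And>i. i \<in> I \<Longrightarrow> B i \<subseteq> A i"
  shows "matching_sum q p E (\<Union>i\<in>I. B i) = (\<Prod>i\<in>I. matching_sum q p E (B i))"
proof (rule matching_sum_UN[OF E fin(1)])
  show "finite (B i)" if "i \<in> I" for i
    using that fin(2) sub finite_subset by blast
  show "disjoint_family_on B I"
    using disj by (rule disjoint_family_on_bisimulation) (use sub in blast)
  show "\<exists>i\<in>I. e \<subseteq> B i" if e: "e \<in> induced_edges E (\<Union>i\<in>I. B i)" for e
  proof -
    have eB: "e \<subseteq> (\<Union>i\<in>I. B i)" using e unfolding induced_edges_def by auto
    have "e \<in> induced_edges E (\<Union>i\<in>I. A i)"
      using e sub unfolding induced_edges_def by blast
    then obtain j where j: "j \<in> I" "e \<subseteq> A j" using inside by blast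
    have "e \<subseteq> B j"
    proof
      fix x assume "x \<in> e"
      then obtain k where k: "k \<in> I" "x \<in> B k" using eB by blast
      with j \<open>x \<in> e\<close> sub have "k = j"
        using disjoint_family_onD[OF disj] by blast
      with k show "x \<in> B j" by simp
    qed
    with j show ?thesis by blast
  qed
qed

lemma sum_matchings_avoiding_vertex:
  assumes fin: "finite S" and u: "u \<in> S"
  shows "(\<Sum>M | M \<in> matchings (induced_edges E S) \<and> u \<notin> \<Union>M. matching_summand q p S M)
       = p u * matching_sum q p E (S - {u})"
proof -
  have "{M. M \<in> matchings (induced_edges E S) \<and> u \<notin> \<Union>M} = matchings (induced_edges E (S - {u}))"
    using matchings_induced_edges_mono[of "S - {u}" S E] Union_matching_induced_edges_subset by blast
  moreover have "matching_summand q p S M = p u * matching_summand q p (S - {u}) M"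
    if "M \<in> matchings (induced_edges E (S - {u}))" for M
  proof -
    have "S - \<Union>M = insert u (S - {u} - \<Union>M)"
      using u Union_matching_induced_edges_subset[OF that] by blast
    then show ?thesis unfolding matching_summand_def using fin by (simp add: mult_ac)
  qed
  ultimately show ?thesis
    unfolding matching_sum_def by (simp add: sum_distrib_left)
qed

lemma sum_matchings_covering_vertex:
  assumes E: "doubleton_edges E" and fin: "finite S" and u: "u \<in> S"
  shows "(\<Sum>M | M \<in> matchings (induced_edges E S) \<and> u \<in> \<Union>M. matching_summand q p S M)
       = - (\<Sum>v\<in>neighbours S E u. q {u, v} * matching_sum q p E (S - {u, v}))"
proof -
  have insert_edge: "matching_summand q p S (insert {u, v} M)
      = - (q {u, v} * matching_summand q p (S - {u, v}) M)"
    if "M \<in> matchings (induced_edges E (S - {u, v}))" for v M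
  proof -
    have "finite M" "{u, v} \<notin> M" "S - \<Union>(insert {u, v} M) = S - {u, v} - \<Union>M"
      using that finite_matching_induced_edges[OF _ that] Union_matching_induced_edges_subset[OF that] fin
      by auto
    then show ?thesis unfolding matching_summand_def by (simp add: mult_ac)
  qed
  have "(\<Sum>M | M \<in> matchings (induced_edges E S) \<and> u \<in> \<Union>M. matching_summand q p S M)
      = (\<Sum>(v, M)\<in>(SIGMA v:neighbours S E u. matchings (induced_edges E (S - {u, v}))).
           matching_summand q p S (insert {u, v} M))"
    unfolding matchings_covering_vertex[OF E u]
    by (subst sum.reindex[OF inj_on_insert_edge_matchings]) (simp add: prod.case_distrib)
  also have "\<dots> = (\<Sum>v\<in>neighbours S E u. \<Sum>M\<in>matchings (induced_edges E (S - {u, v})).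
                      - (q {u, v} * matching_summand q p (S - {u, v}) M))"
    using finite_neighbours[OF fin] fin insert_edge
    by (subst sum.Sigma[symmetric]) (auto intro: finite_matchings_induced_edges intro!: sum.cong)
  also have "\<dots> = - (\<Sum>v\<in>neighbours S E u. q {u, v} * matching_sum q p E (S - {u, v}))"
    unfolding matching_sum_def by (simp add: sum_negf sum_distrib_left)
  finally show ?thesis .
qed

lemma matching_sum_expand_vertex:
  assumes E: "doubleton_edges E" and fin: "finite S" and u: "u \<in> S"
  shows "matching_sum q p E S = p u * matching_sum q p E (S - {u})
           - (\<Sum>v\<in>neighbours S E u. q {u, v} * matching_sum q p E (S - {u, v}))"
proof -
  let ?MS = "matchings (induced_edges E S)"
  have "matching_sum q p E S = sum (matching_summand q p S) (?MS \<inter> {M. u \<notin> \<Union>M})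
      + sum (matching_summand q p S) (?MS - {M. u \<notin> \<Union>M})"
    unfolding matching_sum_def by (rule sum.Int_Diff[OF finite_matchings_induced_edges[OF fin]])
  moreover have "?MS \<inter> {M. u \<notin> \<Union>M} = {M. M \<in> ?MS \<and> u \<notin> \<Union>M}"
    "?MS - {M. u \<notin> \<Union>M} = {M. M \<in> ?MS \<and> u \<in> \<Union>M}"
    by blast+
  ultimately show ?thesis
    using sum_matchings_avoiding_vertex[OF fin u, where E = E and q = q and p = p]
      sum_matchings_covering_vertex[OF E fin u, where q = q and p = p]
    by simp
qed

lemma bij_betw_image_matchings:
  assumes bij: "bij_betw f A B" and edges: "\<And>e. e \<subseteq> A \<Longrightarrow> f ` e \<in> E' \<longleftrightarrow> e \<in> E"
  shows "bij_betw (image (image f)) (matchings (induced_edges E A)) (matchings (induced_edges E' B))"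
proof -
  define H where "H = image (image f)"
  have inj: "inj_on f A" and B: "B = f ` A" using bij unfolding bij_betw_def by auto
  have inj_H: "inj_on H (Pow (Pow A))"
    unfolding H_def using inj_on_image_Pow[OF inj_on_image_Pow[OF inj]] .
  have H_Pow: "H ` Pow (Pow A) = Pow (Pow B)"
    unfolding H_def B by (simp add: image_Pow_surj)
  have match_iff: "H M \<in> matchings (induced_edges E' B) \<longleftrightarrow> M \<in> matchings (induced_edges E A)"
    if M: "M \<subseteq> Pow A" for M
  proof -
    have "H M \<subseteq> induced_edges E' B \<longleftrightarrow> (\<forall>e\<in>M. f ` e \<in> E')"
      using M unfolding H_def induced_edges_def B by (auto simp: image_mono)
    also have "\<dots> \<longleftrightarrow> M \<subseteq> induced_edges E A"
      using M edges unfolding induced_edges_def by blast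
    finally have "H M \<subseteq> induced_edges E' B \<longleftrightarrow> M \<subseteq> induced_edges E A" .
    moreover have "f ` e1 = f ` e2 \<longleftrightarrow> e1 = e2" "f ` e1 \<inter> f ` e2 = {} \<longleftrightarrow> e1 \<inter> e2 = {}"
      if "e1 \<in> M" "e2 \<in> M" for e1 e2
    proof -
      have sub: "e1 \<subseteq> A" "e2 \<subseteq> A" using that M by auto
      show "f ` e1 = f ` e2 \<longleftrightarrow> e1 = e2" by (rule inj_on_image_eq_iff[OF inj sub])
      show "f ` e1 \<inter> f ` e2 = {} \<longleftrightarrow> e1 \<inter> e2 = {}"
        by (simp flip: inj_on_image_Int[OF inj sub])
    qed
    ultimately show ?thesis unfolding matchings_def H_def by simp
  qed
  have "matchings (induced_edges E' B) = {M' \<in> H ` Pow (Pow A). M' \<in> matchings (induced_edges E' B)}"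
    using matchings_induced_edges_subset_Pow[of E' B] unfolding H_Pow by blast
  also have "\<dots> = H ` {M \<in> Pow (Pow A). H M \<in> matchings (induced_edges E' B)}"
    by blast
  also have "{M \<in> Pow (Pow A). H M \<in> matchings (induced_edges E' B)} = matchings (induced_edges E A)"
    using match_iff matchings_induced_edges_subset_Pow[of E A] by auto
  finally show ?thesis
    using inj_on_subset[OF inj_H matchings_induced_edges_subset_Pow]
    unfolding bij_betw_def H_def by blast
qed

lemma matching_sum_bij_betw:
  assumes bij: "bij_betw f A B"
    and edges: "\<And>e. e \<subseteq> A \<Longrightarrow> f ` e \<in> E' \<longleftrightarrow> e \<in> E"
    and q: "\<And>e. e \<in> induced_edges E A \<Longrightarrow> q' (f ` e) = q e"
    and p: "\<And>x. x \<in> A \<Longrightarrow> p' (f x) = p x"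
  shows "matching_sum q' p' E' B = matching_sum q p E A"
proof -
  have inj: "inj_on f A" and B: "B = f ` A" using bij unfolding bij_betw_def by auto
  have summand: "matching_summand q' p' B (image f ` M) = matching_summand q p A M"
    if M: "M \<in> matchings (induced_edges E A)" for M
  proof -
    have MA: "M \<subseteq> Pow A" using M matchings_induced_edges_subset_Pow by blast
    have inj_M: "inj_on (image f) M"
      using inj_on_subset[OF inj_on_image_Pow[OF inj] MA] .
    have "prod q' (image f ` M) = prod q M"
      using prod.reindex[OF inj_M, of q'] q M by (simp add: matchings_def subset_iff)
    moreover have "B - \<Union>(image f ` M) = f ` (A - \<Union>M)"
      using MA unfolding B by (subst inj_on_image_set_diff[OF inj]) auto
    moreover have "prod p' (f ` (A - \<Union>M)) = prod p (A - \<Union>M)"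
      using prod.reindex[OF inj_on_subset[OF inj], of "A - \<Union>M" p'] p by simp
    ultimately show ?thesis
      unfolding matching_summand_def using card_image[OF inj_M] by simp
  qed
  have "matching_sum q' p' E' B
      = (\<Sum>M\<in>matchings (induced_edges E A). matching_summand q' p' B (image f ` M))"
    unfolding matching_sum_def by (rule sum.reindex_bij_betw[OF bij_betw_image_matchings[OF bij edges], symmetric])
  also have "\<dots> = matching_sum q p E A"
    unfolding matching_sum_def using summand by (rule sum.cong[OF refl])
  finally show ?thesis .
qed

lemma degree_lead_coeff_prod_monic_linear:
  fixes p :: "'a \<Rightarrow> 'b::idom poly"
  assumes "\<And>v. degree (p v) = 1" "\<And>v. lead_coeff (p v) = 1"
  shows "degree (prod p X) = card X" "lead_coeff (prod p X) = 1"
proof -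
  show "lead_coeff (prod p X) = 1"
    by (simp add: lead_coeff_prod assms(2))
  have "p v \<noteq> 0" for v using assms(2)[of v] by auto
  then show "degree (prod p X) = card X"
    by (cases "finite X") (simp_all add: degree_prod_eq_sum_degree assms(1))
qed

lemma degree_matching_summand_le:
  fixes q :: "'a set \<Rightarrow> 'b::idom poly"
  assumes q: "\<And>e. degree (q e) = 0" and p: "\<And>v. degree (p v) = 1" "\<And>v. lead_coeff (p v) = 1"
  shows "degree (matching_summand q p S M) \<le> card (S - \<Union>M)"
proof -
  have "degree ((-1 :: 'b poly) ^ card M * prod q M) = 0"
    using degree_mult_le[of "(-1 :: 'b poly) ^ card M" "prod q M"] degree_prod_sum_le[of M q] q
    by (cases "finite M") (simp_all add: degree_power_eq)
  then show ?thesis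
    using degree_mult_le[of "(-1) ^ card M * prod q M" "prod p (S - \<Union>M)"]
      degree_lead_coeff_prod_monic_linear(1)[OF p, where X = "S - \<Union>M"]
    unfolding matching_summand_def by simp
qed

lemma coeff_matching_sum_card:
  fixes q :: "'a set \<Rightarrow> 'b::idom poly"
  assumes E: "doubleton_edges E" and fin: "finite S"
    and q: "\<And>e. degree (q e) = 0" and p: "\<And>v. degree (p v) = 1" "\<And>v. lead_coeff (p v) = 1"
  shows "coeff (matching_sum q p E S) (card S) = 1"
proof -
  define MS where "MS = matchings (induced_edges E S)"
  have "{} \<in> MS" unfolding MS_def matchings_def by simp
  have "coeff (matching_summand q p S M) (card S) = 0" if M: "M \<in> MS - {{}}" for M
  proof -
    obtain e where e: "e \<in> M" using M by blast
    then have "e \<subseteq> S" "e \<noteq> {}"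
      using M matching_induced_edgesD doubleton_edges_nonempty[OF E] unfolding MS_def by blast+
    then have "card (S - \<Union>M) < card S"
      using e fin by (intro psubset_card_mono) auto
    then show ?thesis
      using degree_matching_summand_le[where q = q and p = p and S = S and M = M, OF q p] by (simp add: coeff_eq_0)
  qed
  then have "coeff (matching_sum q p E S) (card S) = coeff (matching_summand q p S {}) (card S)"
    unfolding matching_sum_def MS_def[symmetric] coeff_sum
    using sum.remove[OF _ \<open>{} \<in> MS\<close>, of "\<lambda>M. coeff (matching_summand q p S M) (card S)"]
      finite_matchings_induced_edges[OF fin] unfolding MS_def by simp
  also have "\<dots> = 1"
    unfolding matching_summand_def
    using degree_lead_coeff_prod_monic_linear[OF p, where X = S] by simp
  finally show ?thesis .
qed

lemma matching_sum_nonzero: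
  fixes q :: "'a set \<Rightarrow> 'b::idom poly"
  assumes "doubleton_edges E" "finite S"
    "\<And>e. degree (q e) = 0" "\<And>v. degree (p v) = 1" "\<And>v. lead_coeff (p v) = 1"
  shows "matching_sum q p E S \<noteq> 0"
  using coeff_matching_sum_card[of E S q p] assms by fastforce

section \<open>Path trees\<close>

abbreviation pt_matching_sum ::
    "('a set \<Rightarrow> 'b::comm_ring_1) \<Rightarrow> ('a \<Rightarrow> 'b) \<Rightarrow> 'a set \<Rightarrow> 'a set set \<Rightarrow> 'a \<Rightarrow> 'a list set \<Rightarrow> 'b" where
  "pt_matching_sum q p S E u X \<equiv> matching_sum (\<lambda>e. q (last ` e)) (\<lambda>x. p (last x)) (pt_edges S E u) X"

lemma is_walk_singleton: "is_walk S E [a] \<longleftrightarrow> a \<in> S"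
  unfolding is_walk_def by simp

lemma is_walk_Cons_Cons:
  "is_walk S E (a # b # r) \<longleftrightarrow> a \<in> S \<and> {a, b} \<in> E \<and> is_walk S E (b # r)"
  unfolding is_walk_def by auto

lemma finite_pt_vertices:
  assumes "finite S"
  shows "finite (pt_vertices S E u)"
proof -
  have "pt_vertices S E u \<subseteq> {xs. set xs \<subseteq> S \<and> length xs \<le> card S}"
  proof
    fix x assume "x \<in> pt_vertices S E u"
    then have "set x \<subseteq> S" "distinct x" unfolding pt_vertices_def is_walk_def by auto
    then show "x \<in> {xs. set xs \<subseteq> S \<and> length xs \<le> card S}"
      using card_mono[OF assms] distinct_card by (metis mem_Collect_eq)
  qed
  then show ?thesis using finite_lists_length_le[OF assms] finite_subset by blast
qed

lemma pt_vertices_Nil: "[] \<notin> pt_vertices S E u"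
  unfolding pt_vertices_def is_walk_def by auto

lemma root_in_pt_vertices: "u \<in> S \<Longrightarrow> [u] \<in> pt_vertices S E u"
  unfolding pt_vertices_def is_walk_def by simp

lemma doubleton_edges_pt_edges: "doubleton_edges (pt_edges S E u)"
proof (unfold doubleton_edges_def pt_edges_def, clarify)
  fix x y
  show "\<exists>a b. a \<noteq> b \<and> {x, x @ [y]} = {a, b}" by (intro exI[of _ x] exI[of _ "x @ [y]"]) simp
qed

lemma induced_edges_pt_vertices: "induced_edges (pt_edges S E u) (pt_vertices S E u) = pt_edges S E u"
  unfolding induced_edges_def pt_edges_def by auto

lemma pt_vertices_second_neighbour:
  "x \<in> pt_vertices S E u \<Longrightarrow> x = u # v # r \<Longrightarrow> v \<in> neighbours S E u"
  unfolding pt_vertices_def neighbours_def is_walk_def by auto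

lemma pt_vertices_non_root:
  assumes "x \<in> pt_vertices S E u" "x \<noteq> [u]"
  shows "\<exists>v r. x = u # v # r"
proof -
  have "x \<noteq> []" "hd x = u" using assms(1) unfolding pt_vertices_def is_walk_def by auto
  with assms(2) show ?thesis by (cases x; cases "tl x") auto
qed

definition pt_branch :: "'a set \<Rightarrow> 'a set set \<Rightarrow> 'a \<Rightarrow> 'a \<Rightarrow> 'a list set" where
  "pt_branch S E u v = {x\<in>pt_vertices S E u. \<exists>r. x = u # v # r}"

lemma pt_vertices_minus_root:
  "pt_vertices S E u - {[u]} = (\<Union>v\<in>neighbours S E u. pt_branch S E u v)"
proof
  show "pt_vertices S E u - {[u]} \<subseteq> (\<Union>v\<in>neighbours S E u. pt_branch S E u v)"
  proof
    fix x assume x: "x \<in> pt_vertices S E u - {[u]}"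
    then obtain v r where xe: "x = u # v # r" using pt_vertices_non_root[of x S E u] by auto
    then have "v \<in> neighbours S E u"
      using x by (intro pt_vertices_second_neighbour) auto
    with x xe show "x \<in> (\<Union>v\<in>neighbours S E u. pt_branch S E u v)"
      unfolding pt_branch_def by auto
  qed
  show "(\<Union>v\<in>neighbours S E u. pt_branch S E u v) \<subseteq> pt_vertices S E u - {[u]}"
    unfolding pt_branch_def by auto
qed

lemma disjoint_family_pt_branch: "disjoint_family_on (pt_branch S E u) I"
  unfolding disjoint_family_on_def pt_branch_def by auto

lemma pt_edge_in_branch:
  assumes "e \<in> induced_edges (pt_edges S E u) (pt_vertices S E u - {[u]})"
  shows "\<exists>v\<in>neighbours S E u. e \<subseteq> pt_branch S E u v"
proof -
  obtain x y where e: "e = {x, x @ [y]}" "x \<in> pt_vertices S E u" "x @ [y] \<in> pt_vertices S E u"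
    using assms unfolding induced_edges_def pt_edges_def by blast
  have "x \<noteq> [u]" using assms e(1) unfolding induced_edges_def by auto
  then obtain v r where x: "x = u # v # r"
    using e(2) pt_vertices_non_root[of x S E u] by auto
  then have "x \<in> pt_branch S E u v" "x @ [y] \<in> pt_branch S E u v"
    using e unfolding pt_branch_def by auto
  moreover have "v \<in> neighbours S E u"
    using e(2) x by (rule pt_vertices_second_neighbour)
  ultimately show ?thesis using e(1) by blast
qed

lemma pt_branch_tl:
  assumes "x \<in> pt_branch S E u v"
  shows "tl x \<in> pt_vertices (S - {u}) E v" "u # tl x = x" "last (tl x) = last x"
proof -
  obtain r where x: "x = u # v # r" using assms unfolding pt_branch_def by blast
  have "is_walk S E x" "distinct x" using assms unfolding pt_branch_def pt_vertices_def by auto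
  then have "is_walk (S - {u}) E (v # r)" "distinct (v # r)"
    using x unfolding is_walk_def by auto
  then show "tl x \<in> pt_vertices (S - {u}) E v" using x unfolding pt_vertices_def by simp
  show "u # tl x = x" "last (tl x) = last x" using x by auto
qed

lemma Cons_in_pt_branch:
  assumes "u \<in> S" "{u, v} \<in> E" "y \<in> pt_vertices (S - {u}) E v"
  shows "u # y \<in> pt_branch S E u v"
proof -
  have y: "is_walk (S - {u}) E y" "distinct y" "hd y = v"
    using assms(3) unfolding pt_vertices_def by auto
  then obtain r where "y = v # r" unfolding is_walk_def by (cases y) auto
  moreover have "is_walk S E y" "u \<notin> set y" using y(1) unfolding is_walk_def by auto
  ultimately show ?thesis
    using assms(1,2) y(2) unfolding pt_branch_def pt_vertices_def by (auto simp: is_walk_Cons_Cons)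
qed

lemma pt_edges_tl_iff:
  assumes uv: "u \<in> S" "{u, v} \<in> E" and e: "e \<subseteq> pt_branch S E u v"
  shows "tl ` e \<in> pt_edges (S - {u}) E v \<longleftrightarrow> e \<in> pt_edges S E u"
proof
  assume "tl ` e \<in> pt_edges (S - {u}) E v"
  then obtain y z where y: "tl ` e = {y, y @ [z]}"
    "y \<in> pt_vertices (S - {u}) E v" "y @ [z] \<in> pt_vertices (S - {u}) E v"
    unfolding pt_edges_def by blast
  have "e = (\<lambda>y. u # y) ` tl ` e"
    using pt_branch_tl(2) e by (force simp: image_image)
  then have "e = {u # y, (u # y) @ [z]}" using y(1) by simp
  moreover have "u # y \<in> pt_branch S E u v" "u # (y @ [z]) \<in> pt_branch S E u v"
    using Cons_in_pt_branch[OF uv] y(2,3) by auto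
  ultimately show "e \<in> pt_edges S E u"
    unfolding pt_edges_def pt_branch_def by (auto intro!: exI[of _ "u # y"])
next
  assume "e \<in> pt_edges S E u"
  then obtain x z where x: "e = {x, x @ [z]}" unfolding pt_edges_def by blast
  with e have xb: "x \<in> pt_branch S E u v" "x @ [z] \<in> pt_branch S E u v" by auto
  then have "tl (x @ [z]) = tl x @ [z]" unfolding pt_branch_def by auto
  then have "tl ` e = {tl x, tl x @ [z]}" using x by simp
  moreover have "tl x \<in> pt_vertices (S - {u}) E v" "tl x @ [z] \<in> pt_vertices (S - {u}) E v"
    using pt_branch_tl(1)[OF xb(1)] pt_branch_tl(1)[OF xb(2)] \<open>tl (x @ [z]) = tl x @ [z]\<close> by auto
  ultimately show "tl ` e \<in> pt_edges (S - {u}) E v"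
    unfolding pt_edges_def by (auto intro!: exI[of _ "tl x"])
qed

lemma pt_matching_sum_branch:
  assumes uv: "u \<in> S" "{u, v} \<in> E" and X: "X \<subseteq> pt_branch S E u v"
  shows "pt_matching_sum q p S E u X = pt_matching_sum q p (S - {u}) E v (tl ` X)"
proof (rule matching_sum_bij_betw[symmetric])
  show "bij_betw tl X (tl ` X)"
  proof (intro inj_on_imp_bij_betw inj_onI)
    fix x y assume "x \<in> X" "y \<in> X" "tl x = tl y"
    then show "x = y" using X pt_branch_tl(2)[of x S E u v] pt_branch_tl(2)[of y S E u v] by auto
  qed
  show "tl ` e \<in> pt_edges (S - {u}) E v \<longleftrightarrow> e \<in> pt_edges S E u" if "e \<subseteq> X" for e
    using pt_edges_tl_iff[OF uv] that X by blast
  show "q (last ` tl ` e) = q (last ` e)" if "e \<in> induced_edges (pt_edges S E u) X" for e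
  proof -
    have "e \<subseteq> pt_branch S E u v" using that X unfolding induced_edges_def by auto
    then have "last ` tl ` e = last ` e"
      unfolding image_image by (intro image_cong refl pt_branch_tl(3)) blast
    then show ?thesis by simp
  qed
  show "p (last (tl x)) = p (last x)" if "x \<in> X" for x
    using that X pt_branch_tl(3)[of x S E u v] by auto
qed

lemma tl_image_pt_branch:
  assumes "u \<in> S" "v \<in> neighbours S E u"
  shows "tl ` pt_branch S E u v = pt_vertices (S - {u}) E v"
proof
  show "tl ` pt_branch S E u v \<subseteq> pt_vertices (S - {u}) E v"
    using pt_branch_tl(1)[of _ S E u v] by blast
  show "pt_vertices (S - {u}) E v \<subseteq> tl ` pt_branch S E u v"
  proof
    fix y assume "y \<in> pt_vertices (S - {u}) E v"
    then have "u # y \<in> pt_branch S E u v"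
      using assms by (intro Cons_in_pt_branch) (auto simp: neighbours_def)
    then show "y \<in> tl ` pt_branch S E u v" by (rule rev_image_eqI) simp
  qed
qed

lemma child_in_pt_branch:
  assumes E: "doubleton_edges E" and u: "u \<in> S" and v: "v \<in> neighbours S E u"
  shows "[u, v] \<in> pt_branch S E u v"
  using Cons_in_pt_branch[of u S v E "[v]"] root_in_pt_vertices[of v "S - {u}" E] u v
    neighbour_neq[OF E v] unfolding neighbours_def by auto

lemma tl_image_pt_branch_minus_child:
  assumes E: "doubleton_edges E" and u: "u \<in> S" and v: "v \<in> neighbours S E u"
  shows "tl ` (pt_branch S E u v - {[u, v]}) = pt_vertices (S - {u}) E v - {[v]}"
proof -
  have "[u, v] \<in> pt_branch S E u v" by (rule child_in_pt_branch[OF E u v])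
  moreover have "inj_on tl (pt_branch S E u v)"
    by (rule inj_onI) (metis pt_branch_tl(2))
  ultimately show ?thesis
    using tl_image_pt_branch[OF u v] by (simp add: inj_on_image_set_diff)
qed

lemma pt_matching_sum_UN_branches:
  assumes fin: "finite S" and B: "\<And>v. v \<in> neighbours S E u \<Longrightarrow> B v \<subseteq> pt_branch S E u v"
  shows "pt_matching_sum q p S E u (\<Union>v\<in>neighbours S E u. B v)
       = (\<Prod>v\<in>neighbours S E u. pt_matching_sum q p S E u (B v))"
proof (rule matching_sum_UN_subset[OF doubleton_edges_pt_edges finite_neighbours[OF fin] _
      disjoint_family_pt_branch _ B])
  show "finite (pt_branch S E u v)" for v
    using finite_pt_vertices[OF fin] unfolding pt_branch_def by simp
  show "\<exists>v\<in>neighbours S E u. e \<subseteq> pt_branch S E u v"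
    if "e \<in> induced_edges (pt_edges S E u) (\<Union>v\<in>neighbours S E u. pt_branch S E u v)" for e
    using pt_edge_in_branch[of e S E u] that by (simp add: pt_vertices_minus_root)
qed

lemma pt_matching_sum_minus_root:
  assumes fin: "finite S" and u: "u \<in> S"
  shows "pt_matching_sum q p S E u (pt_vertices S E u - {[u]})
       = (\<Prod>v\<in>neighbours S E u. pt_matching_sum q p (S - {u}) E v (pt_vertices (S - {u}) E v))"
  unfolding pt_vertices_minus_root pt_matching_sum_UN_branches[OF fin order_refl]
proof (rule prod.cong[OF refl])
  fix v assume v: "v \<in> neighbours S E u"
  then show "pt_matching_sum q p S E u (pt_branch S E u v)
      = pt_matching_sum q p (S - {u}) E v (pt_vertices (S - {u}) E v)"
    using pt_matching_sum_branch[OF u, of v E "pt_branch S E u v"] tl_image_pt_branch[OF u v]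
    unfolding neighbours_def by auto
qed

lemma pt_matching_sum_minus_root_child:
  assumes E: "doubleton_edges E" and fin: "finite S" and u: "u \<in> S" and v: "v \<in> neighbours S E u"
  shows "pt_matching_sum q p S E u (pt_vertices S E u - {[u], [u, v]})
       = pt_matching_sum q p (S - {u}) E v (pt_vertices (S - {u}) E v - {[v]}) *
         (\<Prod>v'\<in>neighbours S E u - {v}.
            pt_matching_sum q p (S - {u}) E v' (pt_vertices (S - {u}) E v'))"
proof -
  define B where "B v' = (if v' = v then pt_branch S E u v - {[u, v]} else pt_branch S E u v')" for v'
  have split: "pt_vertices S E u - {[u], [u, v]} = (\<Union>v'\<in>neighbours S E u. B v')"
    using pt_vertices_minus_root[of S E u] v unfolding B_def pt_branch_def by auto
  have "pt_matching_sum q p S E u (pt_vertices S E u - {[u], [u, v]})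
      = (\<Prod>v'\<in>neighbours S E u. pt_matching_sum q p S E u (B v'))"
  proof -
    have "B v' \<subseteq> pt_branch S E u v'" for v' unfolding B_def by auto
    then show ?thesis
      unfolding split
      by (intro pt_matching_sum_UN_branches[OF fin])
  qed
  also have "\<dots> = pt_matching_sum q p S E u (B v) *
      (\<Prod>v'\<in>neighbours S E u - {v}. pt_matching_sum q p S E u (B v'))"
    using prod.remove[OF finite_neighbours[OF fin] v] .
  also have "pt_matching_sum q p S E u (B v)
      = pt_matching_sum q p (S - {u}) E v (pt_vertices (S - {u}) E v - {[v]})"
    using pt_matching_sum_branch[of u S v E "B v"] tl_image_pt_branch_minus_child[OF E u v] u v
    unfolding B_def neighbours_def by auto
  also have "(\<Prod>v'\<in>neighbours S E u - {v}. pt_matching_sum q p S E u (B v'))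
      = (\<Prod>v'\<in>neighbours S E u - {v}. pt_matching_sum q p (S - {u}) E v' (pt_vertices (S - {u}) E v'))"
  proof (rule prod.cong[OF refl])
    fix v' assume v': "v' \<in> neighbours S E u - {v}"
    then show "pt_matching_sum q p S E u (B v')
        = pt_matching_sum q p (S - {u}) E v' (pt_vertices (S - {u}) E v')"
      using pt_matching_sum_branch[of u S v' E "B v'"] tl_image_pt_branch[OF u, of v' E] u
      unfolding B_def neighbours_def by auto
  qed
  finally show ?thesis .
qed

lemma neighbours_pt_root:
  assumes E: "doubleton_edges E" and u: "u \<in> S"
  shows "neighbours (pt_vertices S E u) (pt_edges S E u) [u] = (\<lambda>v. [u, v]) ` neighbours S E u"
proof
  show "neighbours (pt_vertices S E u) (pt_edges S E u) [u] \<subseteq> (\<lambda>v. [u, v]) ` neighbours S E u"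
  proof
    fix y assume "y \<in> neighbours (pt_vertices S E u) (pt_edges S E u) [u]"
    then obtain x z where xz: "{[u], y} = {x, x @ [z]}" "x \<in> pt_vertices S E u" "x @ [z] \<in> pt_vertices S E u"
      unfolding neighbours_def pt_edges_def by blast
    have "x \<noteq> []" using xz(2) pt_vertices_Nil by metis
    then have "x = [u]" "y = x @ [z]"
      using xz(1) by (cases x; auto simp: doubleton_eq_iff)+
    then show "y \<in> (\<lambda>v. [u, v]) ` neighbours S E u"
      using xz(3) pt_vertices_second_neighbour[of "[u, z]" S E u z "[]"] by auto
  qed
  show "(\<lambda>v. [u, v]) ` neighbours S E u \<subseteq> neighbours (pt_vertices S E u) (pt_edges S E u) [u]"
  proof clarify
    fix v assume "v \<in> neighbours S E u"
    then have "[u, v] \<in> pt_vertices S E u"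
      using child_in_pt_branch[OF E u] unfolding pt_branch_def by blast
    moreover have "{[u], [u] @ [v]} \<in> pt_edges S E u"
      using calculation root_in_pt_vertices[OF u] unfolding pt_edges_def by fastforce
    ultimately show "[u, v] \<in> neighbours (pt_vertices S E u) (pt_edges S E u) [u]"
      unfolding neighbours_def by simp
  qed
qed

lemma pt_matching_sum_expand_root:
  fixes q :: "'a set \<Rightarrow> 'b::comm_ring_1" and p :: "'a \<Rightarrow> 'b"
  assumes E: "doubleton_edges E" and fin: "finite S" and u: "u \<in> S"
  defines "\<Phi> v \<equiv> pt_matching_sum q p (S - {u}) E v (pt_vertices (S - {u}) E v)"
    and "\<Psi> v \<equiv> pt_matching_sum q p (S - {u}) E v (pt_vertices (S - {u}) E v - {[v]})"
  shows "pt_matching_sum q p S E u (pt_vertices S E u)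
       = p u * (\<Prod>v\<in>neighbours S E u. \<Phi> v)
         - (\<Sum>v\<in>neighbours S E u. q {u, v} * (\<Psi> v * (\<Prod>v'\<in>neighbours S E u - {v}. \<Phi> v')))"
proof -
  have "pt_matching_sum q p S E u (pt_vertices S E u)
      = p u * pt_matching_sum q p S E u (pt_vertices S E u - {[u]})
        - (\<Sum>y\<in>neighbours (pt_vertices S E u) (pt_edges S E u) [u].
             q (last ` {[u], y}) * pt_matching_sum q p S E u (pt_vertices S E u - {[u], y}))"
    using matching_sum_expand_vertex[where q = "\<lambda>e. q (last ` e)" and p = "\<lambda>x. p (last x)",
        OF doubleton_edges_pt_edges finite_pt_vertices[OF fin] root_in_pt_vertices[OF u]]
    by simp
  also have "pt_matching_sum q p S E u (pt_vertices S E u - {[u]}) = (\<Prod>v\<in>neighbours S E u. \<Phi> v)"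
    unfolding \<Phi>_def by (rule pt_matching_sum_minus_root[OF fin u])
  also have "(\<Sum>y\<in>neighbours (pt_vertices S E u) (pt_edges S E u) [u].
        q (last ` {[u], y}) * pt_matching_sum q p S E u (pt_vertices S E u - {[u], y}))
      = (\<Sum>v\<in>neighbours S E u. q {u, v} * pt_matching_sum q p S E u (pt_vertices S E u - {[u], [u, v]}))"
    unfolding neighbours_pt_root[OF E u] by (simp add: sum.reindex inj_on_def insert_commute)
  also have "\<dots> = (\<Sum>v\<in>neighbours S E u. q {u, v} * (\<Psi> v * (\<Prod>v'\<in>neighbours S E u - {v}. \<Phi> v')))"
    unfolding \<Phi>_def \<Psi>_def
    by (intro sum.cong refl) (simp add: pt_matching_sum_minus_root_child[OF E fin u])
  finally show ?thesis .
qed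

section \<open>Godsil's identity\<close>

text \<open>
  \<open>F(G) / F(G - u) = F(T) / F(T - u)\<close>, cross-multiplied: both sides obey the vertex recursion
  at \<open>u\<close>, and the induction hypothesis for \<open>G - u\<close> rooted at each neighbour \<open>v\<close> matches
  the terms \<open>F(G - u - v)\<close> with the subtrees \<open>T(G - u, v) - v\<close>.
\<close>

lemma matching_sum_mult_pt_minus_root:
  fixes q :: "'a set \<Rightarrow> 'b::comm_ring_1" and p :: "'a \<Rightarrow> 'b"
  assumes E: "doubleton_edges E" and "finite S" "u \<in> S"
  shows "matching_sum q p E S * pt_matching_sum q p S E u (pt_vertices S E u - {[u]})
       = pt_matching_sum q p S E u (pt_vertices S E u) * matching_sum q p E (S - {u})"
  using assms(2,3)
proof (induction "card S" arbitrary: S u rule: less_induct)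
  case less
  define N where "N = neighbours S E u"
  define G where "G = matching_sum q p E"
  define \<Phi> where "\<Phi> v = pt_matching_sum q p (S - {u}) E v (pt_vertices (S - {u}) E v)" for v
  define \<Psi> where "\<Psi> v = pt_matching_sum q p (S - {u}) E v (pt_vertices (S - {u}) E v - {[v]})" for v
  define R where "R v = (\<Prod>v'\<in>N - {v}. \<Phi> v')" for v
  have fin: "finite S" and u: "u \<in> S" by fact+
  have finN: "finite N" unfolding N_def using finite_neighbours[OF fin] .
  have IH: "G (S - {u, v}) * \<Phi> v = G (S - {u}) * \<Psi> v" if v: "v \<in> N" for v
  proof -
    have "v \<in> S - {u}" using neighbour_neq[OF E] v unfolding N_def by blast
    moreover have "card (S - {u}) < card S" using fin u by (rule card_Diff1_less)
    moreover have "S - {u} - {v} = S - {u, v}" by auto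
    ultimately show ?thesis
      using less.hyps[of "S - {u}" v] fin unfolding G_def \<Phi>_def \<Psi>_def by (simp add: mult.commute)
  qed
  have tree: "pt_matching_sum q p S E u (pt_vertices S E u)
      = p u * (\<Prod>v\<in>N. \<Phi> v) - (\<Sum>v\<in>N. q {u, v} * (\<Psi> v * R v))"
    unfolding N_def \<Phi>_def \<Psi>_def R_def by (rule pt_matching_sum_expand_root[OF E fin u])
  have "(\<Sum>v\<in>N. q {u, v} * G (S - {u, v})) * (\<Prod>v\<in>N. \<Phi> v)
      = (\<Sum>v\<in>N. q {u, v} * (G (S - {u, v}) * \<Phi> v * R v))"
    unfolding R_def sum_distrib_right
    by (intro sum.cong refl) (simp add: prod.remove[OF finN] mult_ac)
  also have "\<dots> = G (S - {u}) * (\<Sum>v\<in>N. q {u, v} * (\<Psi> v * R v))"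
    unfolding sum_distrib_left
  proof (intro sum.cong refl)
    fix v assume "v \<in> N"
    then show "q {u, v} * (G (S - {u, v}) * \<Phi> v * R v) = G (S - {u}) * (q {u, v} * (\<Psi> v * R v))"
      by (simp only: IH) (simp add: mult_ac)
  qed
  finally have "G S * (\<Prod>v\<in>N. \<Phi> v)
      = pt_matching_sum q p S E u (pt_vertices S E u) * G (S - {u})"
    unfolding tree G_def matching_sum_expand_vertex[OF E fin u] N_def[symmetric]
    by (simp add: algebra_simps)
  then show ?case
    unfolding G_def \<Phi>_def N_def pt_matching_sum_minus_root[OF fin u] .
qed

section \<open>Connectivity and divisibility\<close>

definition reachable :: "'a set \<Rightarrow> 'a set set \<Rightarrow> 'a \<Rightarrow> 'a \<Rightarrow> bool" where
  "reachable S E a b \<longleftrightarrow> (\<exists>p. is_walk S E p \<and> hd p = a \<and> last p = b)"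

lemma graph_connected_iff_reachable:
  "graph_connected S E \<longleftrightarrow> (\<forall>a\<in>S. \<forall>b\<in>S. reachable S E a b)"
  unfolding graph_connected_def reachable_def ..

lemma reachable_refl: "a \<in> S \<Longrightarrow> reachable S E a a"
  unfolding reachable_def by (intro exI[of _ "[a]"]) (simp add: is_walk_singleton)

lemma reachable_edge: "a \<in> S \<Longrightarrow> b \<in> S \<Longrightarrow> {a, b} \<in> E \<Longrightarrow> reachable S E a b"
  unfolding reachable_def by (intro exI[of _ "[a, b]"]) (simp add: is_walk_Cons_Cons is_walk_singleton)

lemma reachable_trans:
  assumes "reachable S E a b" "reachable S E b c"
  shows "reachable S E a c"
proof -
  obtain w where w: "is_walk S E w" "hd w = a" "last w = b"
    using assms(1) unfolding reachable_def by blast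
  obtain w' where w': "is_walk S E w'" "hd w' = b" "last w' = c"
    using assms(2) unfolding reachable_def by blast
  have "w \<noteq> []" "w' \<noteq> []" using w(1) w'(1) unfolding is_walk_def by auto
  then obtain r where r: "w' = b # r" using w'(2) by (cases w') auto
  have "is_walk S E (w @ r)"
    using w w' r \<open>w \<noteq> []\<close> unfolding is_walk_def
    by (auto simp: successively_append_iff successively_Cons split: list.splits)
  moreover have "hd (w @ r) = a" "last (w @ r) = c"
    using w w' r \<open>w \<noteq> []\<close> by auto
  ultimately show ?thesis unfolding reachable_def by blast
qed

definition edge_closed :: "'a set \<Rightarrow> 'a set set \<Rightarrow> 'a set \<Rightarrow> bool" where
  "edge_closed S E C \<longleftrightarrow> C \<subseteq> S \<and> (\<forall>a b. a \<in> C \<longrightarrow> b \<in> S \<longrightarrow> {a, b} \<in> E \<longrightarrow> b \<in> C)"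

lemma edge_closed_Diff:
  "edge_closed S E C \<Longrightarrow> edge_closed S E (S - C)"
  unfolding edge_closed_def by (metis Diff_iff Diff_subset insert_commute)

lemma walk_subset_edge_closed:
  "is_walk S E w \<Longrightarrow> hd w \<in> C \<Longrightarrow> edge_closed S E C \<Longrightarrow> set w \<subseteq> C"
proof (induction w rule: induct_list012)
  case (3 a b r)
  then have "b \<in> C"
    unfolding edge_closed_def is_walk_def by auto
  with 3 show ?case by (simp add: is_walk_Cons_Cons)
qed simp_all

lemma reachable_edge_closed:
  assumes "reachable S E a b" "edge_closed S E C" "a \<in> C"
  shows "reachable C E a b"
proof -
  obtain w where w: "is_walk S E w" "hd w = a" "last w = b"
    using assms(1) unfolding reachable_def by blast
  then have "set w \<subseteq> C" using walk_subset_edge_closed assms(2,3) by blast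
  with w show ?thesis unfolding reachable_def is_walk_def by auto
qed

lemma pt_vertices_edge_closed:
  assumes "edge_closed S E C" "n \<in> C"
  shows "pt_vertices S E n = pt_vertices C E n" "pt_edges S E n = pt_edges C E n"
proof -
  show pv: "pt_vertices S E n = pt_vertices C E n"
  proof
    show "pt_vertices S E n \<subseteq> pt_vertices C E n"
    proof
      fix x assume x: "x \<in> pt_vertices S E n"
      then have "set x \<subseteq> C"
        using walk_subset_edge_closed[of S E x C] assms unfolding pt_vertices_def by auto
      with x show "x \<in> pt_vertices C E n" unfolding pt_vertices_def is_walk_def by auto
    qed
    show "pt_vertices C E n \<subseteq> pt_vertices S E n"
      using assms(1) unfolding edge_closed_def pt_vertices_def is_walk_def by auto
  qed
  then show "pt_edges S E n = pt_edges C E n" unfolding pt_edges_def by simp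
qed

lemma matching_sum_edge_closed:
  assumes E: "doubleton_edges E" and fin: "finite S" and C: "edge_closed S E C"
  shows "matching_sum q p E S = matching_sum q p E C * matching_sum q p E (S - C)"
proof -
  have CS: "C \<subseteq> S" using C unfolding edge_closed_def by blast
  have "e \<subseteq> C \<or> e \<subseteq> S - C" if "e \<in> induced_edges E (C \<union> (S - C))" for e
  proof -
    have e: "e \<in> E" "e \<subseteq> S" using that CS unfolding induced_edges_def by auto
    then obtain a b where "e = {a, b}" using E unfolding doubleton_edges_def by blast
    show ?thesis
    proof (cases "a \<in> C")
      case True
      then have "b \<in> C" using C e \<open>e = {a, b}\<close> unfolding edge_closed_def by auto
      with True show ?thesis using \<open>e = {a, b}\<close> by auto
    next
      case False
      then have "b \<in> S - C"
        using edge_closed_Diff[OF C] e \<open>e = {a, b}\<close> unfolding edge_closed_def by auto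
      with False show ?thesis using e \<open>e = {a, b}\<close> by auto
    qed
  qed
  then have "matching_sum q p E (C \<union> (S - C)) = matching_sum q p E C * matching_sum q p E (S - C)"
    using fin CS by (intro matching_sum_Un[OF E]) (auto intro: finite_subset)
  with CS show ?thesis by (simp add: Un_absorb1)
qed

lemma reachable_via_neighbour:
  assumes "reachable S E u y" "y \<noteq> u"
  shows "\<exists>n\<in>neighbours S E u. reachable (S - {u}) E n y"
proof -
  obtain w where w: "is_walk S E w" "hd w = u" "last w = y"
    using assms(1) unfolding reachable_def by blast
  then have "u \<in> set w" unfolding is_walk_def by (cases w) auto
  then obtain xs zs where split: "w = xs @ u # zs" "u \<notin> set zs" by (metis split_list_last)
  with w assms(2) obtain n r where zs: "zs = n # r" by (cases zs) auto
  have walk: "successively (\<lambda>a b. {a, b} \<in> E) (u # zs)" "set zs \<subseteq> S"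
    using w(1) split(1) unfolding is_walk_def by (auto simp: successively_append_iff)
  then have "n \<in> neighbours S E u" using zs unfolding neighbours_def by auto
  moreover have "is_walk (S - {u}) E zs"
    using walk split(2) zs unfolding is_walk_def by (auto simp: successively_Cons)
  then have "reachable (S - {u}) E n y"
    using w(3) split(1) zs unfolding reachable_def by auto
  ultimately show ?thesis by blast
qed

definition component :: "'a set \<Rightarrow> 'a set set \<Rightarrow> 'a \<Rightarrow> 'a set" where
  "component S E n = {z\<in>S. reachable S E n z}"

lemma root_in_component: "n \<in> S \<Longrightarrow> n \<in> component S E n"
  unfolding component_def by (simp add: reachable_refl)

lemma edge_closed_component: "edge_closed S E (component S E n)"
  unfolding edge_closed_def
proof (intro conjI allI impI)
  show "component S E n \<subseteq> S" unfolding component_def by blast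
  fix a b assume "a \<in> component S E n" "b \<in> S" "{a, b} \<in> E"
  then show "b \<in> component S E n"
    unfolding component_def using reachable_trans[OF _ reachable_edge[of a S b E]] by blast
qed

lemma component_minus_root_reachable:
  assumes "n \<in> S" "y \<in> component S E n - {n}"
  shows "\<exists>v\<in>neighbours (component S E n) E n. reachable (component S E n - {n}) E v y"
proof -
  have "reachable S E n y" using assms(2) unfolding component_def by simp
  then have "reachable (component S E n) E n y"
    by (rule reachable_edge_closed[OF _ edge_closed_component root_in_component[OF assms(1)]])
  then show ?thesis using assms(2) reachable_via_neighbour[of "component S E n" E n y] by simp
qed

lemma outside_component_reachable:
  assumes NS: "N \<subseteq> S" and cover: "\<And>y. y \<in> S \<Longrightarrow> \<exists>n\<in>N. reachable S E n y"
    and z: "z \<in> S - component S E n"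
  shows "\<exists>n'\<in>N - component S E n. reachable (S - component S E n) E n' z"
proof -
  obtain n' where n': "n' \<in> N" "reachable S E n' z" using cover[of z] z by auto
  have "n' \<notin> component S E n"
  proof
    assume "n' \<in> component S E n"
    then have "reachable S E n z" using n'(2) reachable_trans unfolding component_def by auto
    with z show False unfolding component_def by auto
  qed
  then show ?thesis
    using n' NS reachable_edge_closed[OF n'(2) edge_closed_Diff[OF edge_closed_component]]
    by (intro bexI[of _ n']) auto
qed

lemma matching_sum_dvd_pt_matching_sum_step:
  fixes q :: "'a set \<Rightarrow> 'b::idom poly"
  assumes E: "doubleton_edges E" and fin: "finite S" and u: "u \<in> S"
    and q: "\<And>e. degree (q e) = 0" and p: "\<And>v. degree (p v) = 1" "\<And>v. lead_coeff (p v) = 1"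
    and dvd: "matching_sum q p E (S - {u})
      dvd (\<Prod>v\<in>neighbours S E u. pt_matching_sum q p (S - {u}) E v (pt_vertices (S - {u}) E v))"
  shows "matching_sum q p E S dvd pt_matching_sum q p S E u (pt_vertices S E u)"
proof -
  obtain k where k: "pt_matching_sum q p S E u (pt_vertices S E u - {[u]}) = matching_sum q p E (S - {u}) * k"
    using dvd unfolding pt_matching_sum_minus_root[OF fin u, symmetric] by (elim dvdE)
  have "matching_sum q p E (S - {u}) * (matching_sum q p E S * k)
      = matching_sum q p E (S - {u}) * pt_matching_sum q p S E u (pt_vertices S E u)"
    using matching_sum_mult_pt_minus_root[OF E fin u, of q p] unfolding k by (simp add: mult_ac)
  moreover have "matching_sum q p E (S - {u}) \<noteq> 0"
    using matching_sum_nonzero[OF E _ q p] fin by simp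
  ultimately have "pt_matching_sum q p S E u (pt_vertices S E u) = matching_sum q p E S * k"
    by simp
  then show ?thesis by (rule dvdI)
qed

text \<open>
  Several roots are allowed so that the induction can pass to \<open>S - {u}\<close>, whose components
  are reached from the neighbours of \<open>u\<close>.
\<close>

lemma matching_sum_dvd_prod_pt_matching_sum:
  fixes q :: "'a set \<Rightarrow> 'b::idom poly"
  assumes E: "doubleton_edges E"
    and q: "\<And>e. degree (q e) = 0" and p: "\<And>v. degree (p v) = 1" "\<And>v. lead_coeff (p v) = 1"
    and "finite S" "N \<subseteq> S" "\<And>y. y \<in> S \<Longrightarrow> \<exists>n\<in>N. reachable S E n y"
  shows "matching_sum q p E S dvd (\<Prod>n\<in>N. pt_matching_sum q p S E n (pt_vertices S E n))"
  using assms(5-)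
proof (induction "card S" arbitrary: S N rule: less_induct)
  case less
  let ?T = "\<lambda>S n. pt_matching_sum q p S E n (pt_vertices S E n)"
  have fin: "finite S" and NS: "N \<subseteq> S" and cover: "\<And>y. y \<in> S \<Longrightarrow> \<exists>n\<in>N. reachable S E n y"
    by fact+
  show ?case
  proof (cases "S = {}")
    case True
    then show ?thesis using matching_sum_empty[OF E, of q p] by simp
  next
    case False
    then obtain y where "y \<in> S" by auto
    then obtain n where n: "n \<in> N" using cover by auto
    with NS have nS: "n \<in> S" by blast
    define C where "C = component S E n"
    have nC: "n \<in> C" and C: "edge_closed S E C"
      unfolding C_def using nS by (simp_all add: root_in_component edge_closed_component)
    then have CS: "C \<subseteq> S" unfolding edge_closed_def by blast
    then have finC: "finite C" using fin by (rule finite_subset)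
    have "card (C - {n}) < card C" using finC nC by (rule card_Diff1_less)
    also have "card C \<le> card S" using card_mono[OF fin CS] .
    finally have "matching_sum q p E (C - {n}) dvd (\<Prod>v\<in>neighbours C E n. ?T (C - {n}) v)"
      using finC doubleton_edges_neq[OF E] component_minus_root_reachable[OF nS]
      by (intro less.hyps) (auto simp: C_def neighbours_def)
    then have "matching_sum q p E C dvd ?T C n"
      by (rule matching_sum_dvd_pt_matching_sum_step[OF E finC nC q p])
    then have "matching_sum q p E C dvd ?T S n"
      using pt_vertices_edge_closed[OF C nC] by simp
    moreover have "matching_sum q p E (S - C) dvd (\<Prod>n'\<in>N - C. ?T S n')"
    proof -
      have "card (S - C) < card S" using fin nC CS by (intro psubset_card_mono) auto
      then have "matching_sum q p E (S - C) dvd (\<Prod>n'\<in>N - C. ?T (S - C) n')"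
        using fin NS outside_component_reachable[OF NS cover]
        by (intro less.hyps) (auto simp: C_def)
      moreover have "?T (S - C) n' = ?T S n'" if "n' \<in> N - C" for n'
        using pt_vertices_edge_closed[OF edge_closed_Diff[OF C], of n'] that NS by auto
      ultimately show ?thesis by simp
    qed
    ultimately have "matching_sum q p E C * matching_sum q p E (S - C)
        dvd (\<Prod>n'\<in>insert n (N - C). ?T S n')"
      using finite_subset[OF NS fin] nC by (simp add: mult_dvd_mono)
    also have "\<dots> dvd (\<Prod>n'\<in>N. ?T S n')"
      using finite_subset[OF NS fin] n by (intro prod_dvd_prod_subset) auto
    finally show ?thesis using matching_sum_edge_closed[OF E fin C, of q p] by simp
  qed
qed

lemma simple_graph_doubleton_edges: "simple_graph V E \<Longrightarrow> doubleton_edges E"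
  unfolding simple_graph_def doubleton_edges_def by blast

lemma simple_graph_induced_edges: "simple_graph V E \<Longrightarrow> induced_edges E V = E"
  unfolding simple_graph_def induced_edges_def by auto

lemma eta_poly_pt_eq_pt_matching_sum:
  assumes "finite V"
  shows "eta_poly (pt_vertices V E u) (pt_edges V E u) (pt_edge_weight w) (pt_vertex_weight w1)
       = pt_matching_sum (\<lambda>e. [:(cmod (w e))\<^sup>2:]) (\<lambda>v. [:- w1 v, 1:]) V E u (pt_vertices V E u)"
proof -
  have "eta_poly (pt_vertices V E u) (induced_edges (pt_edges V E u) (pt_vertices V E u))
      (pt_edge_weight w) (pt_vertex_weight w1)
    = matching_sum (\<lambda>e. [:(cmod (pt_edge_weight w e))\<^sup>2:]) (\<lambda>x. [:- pt_vertex_weight w1 x, 1:])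
      (pt_edges V E u) (pt_vertices V E u)"
    by (rule eta_poly_eq_matching_sum[OF doubleton_edges_pt_edges finite_pt_vertices[OF assms]])
  then show ?thesis
    unfolding induced_edges_pt_vertices pt_edge_weight_def pt_vertex_weight_def .
qed

theorem corollary3p3:
  fixes V :: "'a set" and E :: "'a set set" and w :: "'a set \<Rightarrow> complex"
    and w1 :: "'a \<Rightarrow> real" and u :: 'a
  assumes "simple_graph V E"
    and "graph_connected V E"
    and "\<forall>e\<in>E. w e \<noteq> 0"
    and "u \<in> V"
  shows "eta_poly V E w w1 dvd
         eta_poly (pt_vertices V E u) (pt_edges V E u) (pt_edge_weight w) (pt_vertex_weight w1)"
proof -
  have E: "doubleton_edges E" and fin: "finite V"
    using assms(1) simple_graph_doubleton_edges unfolding simple_graph_def by auto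
  define q :: "'a set \<Rightarrow> real poly" where "q e = [:(cmod (w e))\<^sup>2:]" for e
  define p :: "'a \<Rightarrow> real poly" where "p v = [:- w1 v, 1:]" for v
  have "eta_poly V E w w1 = matching_sum q p E V"
    using eta_poly_eq_matching_sum[OF E fin] simple_graph_induced_edges[OF assms(1)]
    unfolding q_def p_def by metis
  moreover have "matching_sum q p E V dvd (\<Prod>n\<in>{u}. pt_matching_sum q p V E n (pt_vertices V E n))"
  proof (rule matching_sum_dvd_prod_pt_matching_sum[OF E _ _ _ fin])
    show "\<exists>n\<in>{u}. reachable V E n y" if "y \<in> V" for y
      using assms(2,4) that unfolding graph_connected_iff_reachable by blast
  qed (use assms(4) in \<open>auto simp: q_def p_def\<close>)
  ultimately show ?thesis
    unfolding eta_poly_pt_eq_pt_matching_sum[OF fin] q_def p_def by simp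
qed

end
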